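(* Let $A=(a_{ij})\in\mathcal{B}^{m,n}$ and let $k$ be a field. Let $k[A]=k[x_{ij} : a_{ij}=1]$ and let $A[x]$ be the $m\times n$ matrix over $k[A]$ with $A[x]_{ij}=x_{ij}$ if $a_{ij}=1$ and $0$ otherwise. For $t\geq 1$ let $I_t(A[x])\subseteq k[A]$ be the ideal generated by all $t\times t$ minors of $A[x]$. If for some integer $s\geq 2$ the monomial $x_{i_1j_1}\cdots x_{i_sj_s}$ (a product of variables of $k[A]$) lies in $I_s(A[x])$, then $\{a_{i_kj_k} : 1\leq k\leq s\}$ is an isolated set of $A$.
   Context: $\mathcal{B}^{m,n}$ denotes $m\times n$ matrices with entries in the Boolean semiring $\{0,1\}$ with $\vee$ (or), $\wedge$ (and). A pair of entries $\{a_{ij},a_{k\ell}\}$ is isolated if $a_{ij}=a_{k\ell}=1$ and $a_{i\ell}\wedge a_{kj}=0$. A subset $T$ of the entries of $A$ equal to $1$ is an isolated set if it has size one or every pair of its elements is isolated. *)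

theory Defs
  imports "HOL-Library.Poly_Mapping" "Jordan_Normal_Form.DL_Submatrix" "Jordan_Normal_Form.Determinant"
begin

text \<open>A Boolean m x n matrix is a predicate A :: nat => nat => bool, read on
  indices i < m, j < n (0-based).\<close>

type_synonym 'k mpoly = "((nat \<times> nat) \<Rightarrow>\<^sub>0 nat) \<Rightarrow>\<^sub>0 'k"

definition isolated_pair :: "(nat \<Rightarrow> nat \<Rightarrow> bool) \<Rightarrow> nat \<times> nat \<Rightarrow> nat \<times> nat \<Rightarrow> bool" where
  "isolated_pair A p q \<longleftrightarrow> (case p of (i, j) \<Rightarrow> case q of (k, l) \<Rightarrow>
      A i j \<and> A k l \<and> \<not> (A i l \<and> A k j))"

definition isolated_set :: "(nat \<Rightarrow> nat \<Rightarrow> bool) \<Rightarrow> nat \<Rightarrow> nat \<Rightarrow> (nat \<times> nat) set \<Rightarrow> bool" where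
  "isolated_set A m n T \<longleftrightarrow>
     T \<subseteq> {(i, j). i < m \<and> j < n \<and> A i j} \<and>
     (card T = 1 \<or> (\<forall>p\<in>T. \<forall>q\<in>T. p \<noteq> q \<longrightarrow> isolated_pair A p q))"

definition var :: "nat \<Rightarrow> nat \<Rightarrow> 'k::comm_ring_1 mpoly" where
  "var i j = Poly_Mapping.single (Poly_Mapping.single (i, j) 1) 1"

definition in_kA :: "(nat \<Rightarrow> nat \<Rightarrow> bool) \<Rightarrow> nat \<Rightarrow> nat \<Rightarrow> 'k::comm_ring_1 mpoly \<Rightarrow> bool" where
  "in_kA A m n p \<longleftrightarrow> (\<forall>mon \<in> Poly_Mapping.keys p. Poly_Mapping.keys mon \<subseteq> {(i, j). i < m \<and> j < n \<and> A i j})"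

definition gen_mat :: "(nat \<Rightarrow> nat \<Rightarrow> bool) \<Rightarrow> nat \<Rightarrow> nat \<Rightarrow> 'k::comm_ring_1 mpoly mat" where
  "gen_mat A m n = mat m n (\<lambda>(i, j). if A i j then var i j else 0)"

definition minors :: "nat \<Rightarrow> 'a::comm_ring_1 mat \<Rightarrow> 'a set" where
  "minors t M = {det (submatrix M R C) | R C.
      R \<subseteq> {..<dim_row M} \<and> C \<subseteq> {..<dim_col M} \<and> card R = t \<and> card C = t}"

definition I_t :: "(nat \<Rightarrow> nat \<Rightarrow> bool) \<Rightarrow> nat \<Rightarrow> nat \<Rightarrow> nat \<Rightarrow> 'k::comm_ring_1 mpoly set" where
  "I_t A m n t = {p. \<exists>F c. finite F \<and> F \<subseteq> minors t (gen_mat A m n) \<and>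
       (\<forall>g\<in>F. in_kA A m n (c g)) \<and> p = (\<Sum>g\<in>F. c g * g)}"

end

theory Submission
  imports Defs
begin

(* Every t-minor of A[x] is homogeneous of degree t, so the degree-s component of an element
   of I_s(A[x]) is a k-linear combination of s-minors.  A monomial occurring in a minor is the
   product of the variables along a permutation, so x_{i_1 j_1}...x_{i_s j_s} \<in> I_s already
   puts the positions (i_k, j_k) in distinct rows and columns.  If moreover a_{i_k j_l} = 1 and
   a_{i_l j_k} = 1, composing with a transposition shows that every s-minor has opposite
   coefficients at this monomial and at the one with the columns j_k, j_l exchanged; hence so
   does the monomial itself, whose coefficients there are 1 and 0. *)

section \<open>Degrees and products of monomials\<close>

abbreviation var_mon :: "'a \<Rightarrow> 'a \<Rightarrow>\<^sub>0 nat" where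
  "var_mon x \<equiv> Poly_Mapping.single x 1"

definition mon_deg :: "('a \<Rightarrow>\<^sub>0 nat) \<Rightarrow> nat" where
  "mon_deg \<mu> = (\<Sum>x\<in>Poly_Mapping.keys \<mu>. Poly_Mapping.lookup \<mu> x)"

lemma mon_deg_eq_sum:
  assumes "finite S" "Poly_Mapping.keys \<mu> \<subseteq> S"
  shows "mon_deg \<mu> = (\<Sum>x\<in>S. Poly_Mapping.lookup \<mu> x)"
  unfolding mon_deg_def using assms by (intro sum.mono_neutral_left) (auto simp: in_keys_iff)

lemma mon_deg_add [simp]: "mon_deg (\<mu> + \<nu>) = mon_deg \<mu> + mon_deg \<nu>"
proof -
  let ?S = "Poly_Mapping.keys \<mu> \<union> Poly_Mapping.keys \<nu>"
  have "mon_deg (\<mu> + \<nu>) = (\<Sum>x\<in>?S. Poly_Mapping.lookup (\<mu> + \<nu>) x)"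
    using keys_add[of \<mu> \<nu>] by (intro mon_deg_eq_sum) auto
  also have "\<dots> = mon_deg \<mu> + mon_deg \<nu>"
    by (simp add: lookup_add sum.distrib mon_deg_eq_sum[of ?S])
  finally show ?thesis .
qed

lemma mon_deg_eq_0_iff [simp]: "mon_deg \<mu> = 0 \<longleftrightarrow> \<mu> = 0"
  unfolding mon_deg_def by (auto simp: in_keys_iff intro!: poly_mapping_eqI)

lemma mon_deg_single [simp]: "mon_deg (Poly_Mapping.single x k) = k"
  by (simp add: mon_deg_def)

lemma mon_deg_sum: "mon_deg (sum f S) = (\<Sum>x\<in>S. mon_deg (f x))"
  by (induction S rule: infinite_finite_induct) simp_all

lemma lookup_mult_homogeneous:
  fixes c g :: "('a \<Rightarrow>\<^sub>0 nat) \<Rightarrow>\<^sub>0 'b::semiring_0"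
  assumes "\<And>\<nu>. \<nu> \<in> Poly_Mapping.keys g \<Longrightarrow> mon_deg \<nu> = mon_deg \<mu>"
  shows "Poly_Mapping.lookup (c * g) \<mu> = Poly_Mapping.lookup c 0 * Poly_Mapping.lookup g \<mu>"
proof -
  have "Sum_any (\<lambda>\<beta>. Poly_Mapping.lookup g \<beta> when \<mu> = \<alpha> + \<beta>) = (Poly_Mapping.lookup g \<mu> when \<alpha> = 0)"
    for \<alpha>
  proof -
    have "(Poly_Mapping.lookup g \<beta> when \<mu> = \<alpha> + \<beta>) = ((Poly_Mapping.lookup g \<mu> when \<alpha> = 0) when \<beta> = \<mu>)"
      for \<beta>
    proof (cases "\<mu> = \<alpha> + \<beta> \<and> Poly_Mapping.lookup g \<beta> \<noteq> 0")
      case True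
      then have "mon_deg \<alpha> = 0" using assms[of \<beta>] by (simp add: in_keys_iff)
      then show ?thesis using True by simp
    next
      case False
      then show ?thesis by (auto simp: when_def)
    qed
    then show ?thesis by simp
  qed
  then show ?thesis by (simp add: lookup_mult mult_when)
qed

lemma prod_single_if:
  assumes "finite S"
  shows "(\<Prod>a\<in>S. if P a then Poly_Mapping.single (f a) (1::'b::comm_semiring_1) else 0)
       = (if \<forall>a\<in>S. P a then Poly_Mapping.single (\<Sum>a\<in>S. f a) 1 else 0)"
  using assms by (induction S rule: finite_induct) (auto simp: mult_single)

definition positions_mon :: "(nat \<Rightarrow> 'a) \<Rightarrow> (nat \<Rightarrow> 'b) \<Rightarrow> nat \<Rightarrow> ('a \<times> 'b) \<Rightarrow>\<^sub>0 nat" where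
  "positions_mon \<rho> \<sigma> t = (\<Sum>a<t. var_mon (\<rho> a, \<sigma> a))"

lemma mon_deg_positions_mon [simp]: "mon_deg (positions_mon \<rho> \<sigma> t) = t"
  by (simp add: positions_mon_def mon_deg_sum)

lemma positions_mon_split:
  assumes "a \<noteq> b" "a < t" "b < t"
  shows "positions_mon \<rho> \<sigma> t =
    var_mon (\<rho> a, \<sigma> a) + var_mon (\<rho> b, \<sigma> b) + (\<Sum>x\<in>{..<t} - {a, b}. var_mon (\<rho> x, \<sigma> x))"
  unfolding positions_mon_def using assms sum.subset_diff[of "{a, b}" "{..<t}"] by (simp add: ac_simps)

lemma positions_mon_transpose:
  assumes "a \<noteq> b" "a < t" "b < t"
  shows "positions_mon \<rho> (\<sigma> \<circ> Transposition.transpose a b) t + var_mon (\<rho> a, \<sigma> a) + var_mon (\<rho> b, \<sigma> b)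
       = positions_mon \<rho> \<sigma> t + var_mon (\<rho> a, \<sigma> b) + var_mon (\<rho> b, \<sigma> a)"
proof -
  have "(\<Sum>x\<in>{..<t} - {a, b}. var_mon (\<rho> x, (\<sigma> \<circ> Transposition.transpose a b) x))
      = (\<Sum>x\<in>{..<t} - {a, b}. var_mon (\<rho> x, \<sigma> x))"
    by (intro sum.cong) auto
  then show ?thesis
    using positions_mon_split[OF assms, of \<rho> \<sigma>]
      positions_mon_split[OF assms, of \<rho> "\<sigma> \<circ> Transposition.transpose a b"]
    by (simp add: ac_simps)
qed

lemma lookup_positions_mon_nonzero:
  assumes "Poly_Mapping.lookup (positions_mon \<rho> \<sigma> t) x \<noteq> 0"
  obtains a where "a < t" "x = (\<rho> a, \<sigma> a)"
proof -
  obtain a where "a \<in> {..<t}" "Poly_Mapping.lookup (var_mon (\<rho> a, \<sigma> a)) x \<noteq> 0"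
    using assms unfolding positions_mon_def lookup_sum by (rule sum.not_neutral_contains_not_neutral)
  then show thesis using that by (auto simp: lookup_single when_def split: if_splits)
qed

lemma lookup_positions_mon_row:
  assumes "inj_on \<rho> {..<t}" "a < t"
  shows "Poly_Mapping.lookup (positions_mon \<rho> \<sigma> t) (\<rho> a, c) = (if \<sigma> a = c then 1 else 0)"
proof -
  have "Poly_Mapping.lookup (positions_mon \<rho> \<sigma> t) (\<rho> a, c)
      = (\<Sum>x<t. if x = a then (if \<sigma> a = c then 1 else 0) else 0)"
    unfolding positions_mon_def lookup_sum using assms
    by (intro sum.cong) (auto simp: lookup_single when_def inj_on_eq_iff)
  then show ?thesis using assms(2) by simp
qed

lemma positions_mon_eq_imp_eq:
  assumes "inj_on \<rho> {..<t}" "positions_mon \<rho> \<sigma> t = positions_mon \<rho> \<sigma>' t" "a < t"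
  shows "\<sigma> a = \<sigma>' a"
proof -
  have "(1::nat) = Poly_Mapping.lookup (positions_mon \<rho> \<sigma> t) (\<rho> a, \<sigma> a)"
    by (simp add: lookup_positions_mon_row[OF assms(1,3)])
  also have "\<dots> = (if \<sigma>' a = \<sigma> a then 1 else 0)"
    unfolding assms(2) by (rule lookup_positions_mon_row[OF assms(1,3)])
  finally show ?thesis by (simp split: if_splits)
qed

lemma positions_mon_eq_imp_inj:
  assumes eq: "positions_mon i j s = positions_mon \<rho> \<sigma> t"
    and \<rho>: "inj_on \<rho> {..<t}" and \<sigma>: "inj_on \<sigma> {..<t}"
  shows "inj_on i {..<s} \<and> inj_on j {..<s}"
proof -
  have "i l \<noteq> i l' \<and> j l \<noteq> j l'" if l: "l \<noteq> l'" "l < s" "l' < s" for l l'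
  proof (rule ccontr)
    assume clash: "\<not> (i l \<noteq> i l' \<and> j l \<noteq> j l')"
    note split = positions_mon_split[OF l, of i j]
    have "Poly_Mapping.lookup (positions_mon \<rho> \<sigma> t) (i l, j l) \<noteq> 0"
      unfolding eq[symmetric] split by (simp add: lookup_add)
    then obtain a where a: "a < t" "(i l, j l) = (\<rho> a, \<sigma> a)"
      by (rule lookup_positions_mon_nonzero)
    have "Poly_Mapping.lookup (positions_mon \<rho> \<sigma> t) (i l', j l') \<noteq> 0"
      unfolding eq[symmetric] split by (simp add: lookup_add)
    then obtain a' where a': "a' < t" "(i l', j l') = (\<rho> a', \<sigma> a')"
      by (rule lookup_positions_mon_nonzero)
    have "a = a'"
      using clash a a' inj_onD[OF \<rho>, of a a'] inj_onD[OF \<sigma>, of a a'] by auto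
    then have "2 \<le> Poly_Mapping.lookup (positions_mon i j s) (i l, j l)"
      unfolding split using a a' by (simp add: lookup_add)
    moreover have "Poly_Mapping.lookup (positions_mon \<rho> \<sigma> t) (i l, j l) = 1"
      using lookup_positions_mon_row[OF \<rho> a(1), of \<sigma> "\<sigma> a"] a(2) by simp
    ultimately show False using eq by simp
  qed
  then show ?thesis by (intro conjI inj_onI) fastforce+
qed

section \<open>Leibniz expansion of the minors of A[x]\<close>

definition pattern_mat ::
  "(nat \<Rightarrow> nat \<Rightarrow> bool) \<Rightarrow> (nat \<Rightarrow> nat) \<Rightarrow> (nat \<Rightarrow> nat) \<Rightarrow> nat \<Rightarrow> 'k::comm_ring_1 mpoly mat" where
  "pattern_mat A \<rho> \<gamma> t = mat t t (\<lambda>(a, b). if A (\<rho> a) (\<gamma> b) then var (\<rho> a) (\<gamma> b) else 0)"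

definition pattern_perms ::
  "(nat \<Rightarrow> nat \<Rightarrow> bool) \<Rightarrow> (nat \<Rightarrow> nat) \<Rightarrow> (nat \<Rightarrow> nat) \<Rightarrow> nat \<Rightarrow> (nat \<Rightarrow> nat) set" where
  "pattern_perms A \<rho> \<gamma> t = {p. p permutes {..<t} \<and> (\<forall>a<t. A (\<rho> a) (\<gamma> (p a)))}"

lemma finite_pattern_perms: "finite (pattern_perms A \<rho> \<gamma> t)"
  unfolding pattern_perms_def using finite_permutations[of "{..<t}"]
  by (auto elim: finite_subset[rotated])

lemma submatrix_gen_mat:
  assumes "R \<subseteq> {..<m}" "C \<subseteq> {..<n}" "card R = t" "card C = t"
  shows "submatrix (gen_mat A m n) R C = pattern_mat A (pick R) (pick C) t"
proof -
  have "{i. i < m \<and> i \<in> R} = R" "{j. j < n \<and> j \<in> C} = C" using assms(1,2) by auto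
  moreover have "pick R a < m" if "a < t" for a
    using pick_in_set_le[of a R] assms(1,3) that by auto
  moreover have "pick C b < n" if "b < t" for b
    using pick_in_set_le[of b C] assms(2,4) that by auto
  ultimately show ?thesis
    unfolding submatrix_def pattern_mat_def gen_mat_def using assms(3,4) by (intro eq_matI) auto
qed

lemma minors_gen_mat:
  assumes "g \<in> minors t (gen_mat A m n)"
  obtains \<rho> \<gamma> where "inj_on \<rho> {..<t}" "inj_on \<gamma> {..<t}" "g = det (pattern_mat A \<rho> \<gamma> t)"
proof -
  obtain R C where RC: "R \<subseteq> {..<m}" "C \<subseteq> {..<n}" "card R = t" "card C = t"
    and g: "g = det (submatrix (gen_mat A m n) R C)"
    using assms unfolding minors_def by (auto simp: gen_mat_def)
  have inj: "inj_on (pick S) {..<card S}" for S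
    by (intro strict_mono_on_imp_inj_on) (auto simp: strict_mono_on_def pick_mono_le)
  show thesis
  proof (rule that)
    show "inj_on (pick R) {..<t}" "inj_on (pick C) {..<t}"
      using inj[of R] inj[of C] RC(3,4) by simp_all
    show "g = det (pattern_mat A (pick R) (pick C) t)"
      using g by (simp add: submatrix_gen_mat[OF RC])
  qed
qed

lemma det_pattern_mat:
  "det (pattern_mat A \<rho> \<gamma> t :: 'k::comm_ring_1 mpoly mat) =
     (\<Sum>p\<in>pattern_perms A \<rho> \<gamma> t. Poly_Mapping.single (positions_mon \<rho> (\<gamma> \<circ> p) t) (of_int (sign p)))"
proof -
  have summand: "of_int (sign p) * (\<Prod>a<t. (pattern_mat A \<rho> \<gamma> t :: 'k mpoly mat) $$ (a, p a)) =
      (if \<forall>a<t. A (\<rho> a) (\<gamma> (p a))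
       then Poly_Mapping.single (positions_mon \<rho> (\<gamma> \<circ> p) t) (of_int (sign p)) else 0)"
    if "p permutes {..<t}" for p
  proof -
    have "(\<Prod>a<t. (pattern_mat A \<rho> \<gamma> t :: 'k mpoly mat) $$ (a, p a)) =
        (\<Prod>a<t. if A (\<rho> a) (\<gamma> (p a)) then Poly_Mapping.single (var_mon (\<rho> a, \<gamma> (p a))) 1 else 0)"
      using permutes_in_image[OF that] by (intro prod.cong) (auto simp: pattern_mat_def var_def)
    then show ?thesis
      by (auto simp: prod_single_if positions_mon_def mult_single simp flip: single_of_int)
  qed
  have "det (pattern_mat A \<rho> \<gamma> t :: 'k mpoly mat) =
      (\<Sum>p\<in>{p. p permutes {..<t}}. of_int (sign p) * (\<Prod>a<t. pattern_mat A \<rho> \<gamma> t $$ (a, p a)))"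
    using det_def'[of "pattern_mat A \<rho> \<gamma> t" t] by (simp add: pattern_mat_def atLeast0LessThan)
  also have "\<dots> = (\<Sum>p\<in>{p. p permutes {..<t}}. if \<forall>a<t. A (\<rho> a) (\<gamma> (p a))
       then Poly_Mapping.single (positions_mon \<rho> (\<gamma> \<circ> p) t) (of_int (sign p)) else 0)"
    by (rule sum.cong) (simp_all add: summand)
  also have "\<dots> = (\<Sum>p\<in>pattern_perms A \<rho> \<gamma> t.
       Poly_Mapping.single (positions_mon \<rho> (\<gamma> \<circ> p) t) (of_int (sign p)))"
    unfolding pattern_perms_def by (simp add: sum.inter_filter[OF finite_permutations, symmetric])
  finally show ?thesis .
qed

lemma lookup_det_pattern_mat:
  "Poly_Mapping.lookup (det (pattern_mat A \<rho> \<gamma> t)) \<mu> =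
     (\<Sum>p\<in>{p \<in> pattern_perms A \<rho> \<gamma> t. positions_mon \<rho> (\<gamma> \<circ> p) t = \<mu>}. of_int (sign p))"
  by (simp add: det_pattern_mat lookup_sum lookup_single when_def sum.inter_filter finite_pattern_perms)

lemma lookup_det_pattern_mat_nonzero:
  assumes "Poly_Mapping.lookup (det (pattern_mat A \<rho> \<gamma> t)) \<mu> \<noteq> 0"
  obtains p where "p \<in> pattern_perms A \<rho> \<gamma> t" "positions_mon \<rho> (\<gamma> \<circ> p) t = \<mu>"
proof -
  have "{p \<in> pattern_perms A \<rho> \<gamma> t. positions_mon \<rho> (\<gamma> \<circ> p) t = \<mu>} \<noteq> {}"
    using assms unfolding lookup_det_pattern_mat by (metis sum.empty)
  then show thesis using that by blast
qed

lemma mon_deg_keys_det_pattern_mat: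
  assumes "\<mu> \<in> Poly_Mapping.keys (det (pattern_mat A \<rho> \<gamma> t))"
  shows "mon_deg \<mu> = t"
proof -
  obtain p where "p \<in> pattern_perms A \<rho> \<gamma> t" "positions_mon \<rho> (\<gamma> \<circ> p) t = \<mu>"
    using assms unfolding in_keys_iff by (rule lookup_det_pattern_mat_nonzero)
  then show ?thesis by auto
qed

lemma lookup_det_pattern_mat_perm:
  assumes \<rho>: "inj_on \<rho> {..<t}" and \<gamma>: "inj_on \<gamma> {..<t}" and p: "p \<in> pattern_perms A \<rho> \<gamma> t"
  shows "Poly_Mapping.lookup (det (pattern_mat A \<rho> \<gamma> t)) (positions_mon \<rho> (\<gamma> \<circ> p) t) = of_int (sign p)"
proof -
  have "q = p" if q: "q \<in> pattern_perms A \<rho> \<gamma> t"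
    and eq: "positions_mon \<rho> (\<gamma> \<circ> q) t = positions_mon \<rho> (\<gamma> \<circ> p) t" for q
  proof
    fix a
    have qp: "q permutes {..<t}" and pp: "p permutes {..<t}"
      using p q by (simp_all add: pattern_perms_def)
    show "q a = p a"
    proof (cases "a < t")
      case True
      then show ?thesis
        using positions_mon_eq_imp_eq[OF \<rho> eq True] inj_onD[OF \<gamma>, of "q a" "p a"]
          permutes_in_image[OF qp, of a] permutes_in_image[OF pp, of a] by simp
    next
      case False
      then show ?thesis using permutes_not_in[OF qp] permutes_not_in[OF pp] by simp
    qed
  qed
  then have "{q \<in> pattern_perms A \<rho> \<gamma> t. positions_mon \<rho> (\<gamma> \<circ> q) t = positions_mon \<rho> (\<gamma> \<circ> p) t} = {p}"
    using p by auto
  then show ?thesis by (simp add: lookup_det_pattern_mat)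
qed

lemma pattern_perms_transpose:
  assumes p: "p \<in> pattern_perms A \<rho> \<gamma> t" and "a < t" "b < t"
    and "A (\<rho> a) (\<gamma> (p b))" "A (\<rho> b) (\<gamma> (p a))"
  shows "p \<circ> Transposition.transpose a b \<in> pattern_perms A \<rho> \<gamma> t"
proof -
  have "p permutes {..<t}" using p by (simp add: pattern_perms_def)
  then have "p \<circ> Transposition.transpose a b permutes {..<t}"
    using assms(2,3) by (intro permutes_compose permutes_swap_id) auto
  moreover have "A (\<rho> x) (\<gamma> (p (Transposition.transpose a b x)))" if "x < t" for x
    using assms that by (cases "x = a \<or> x = b") (auto simp: pattern_perms_def)
  ultimately show ?thesis by (simp add: pattern_perms_def)
qed

lemma sign_compose_transpose:
  assumes "p permutes S" "finite S" "a \<noteq> b"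
  shows "sign (p \<circ> Transposition.transpose a b) = - sign p"
proof -
  have "permutation p" using assms(1,2) permutation_permutes by blast
  then show ?thesis using assms(3) by (simp add: sign_compose permutation_swap_id sign_swap_id)
qed

lemma lookup_det_pattern_mat_exchange_nonzero:
  fixes \<nu> :: "(nat \<times> nat) \<Rightarrow>\<^sub>0 nat"
  assumes \<rho>: "inj_on \<rho> {..<t}" and \<gamma>: "inj_on \<gamma> {..<t}"
    and nz: "Poly_Mapping.lookup (det (pattern_mat A \<rho> \<gamma> t :: 'k::comm_ring_1 mpoly mat))
               (\<nu> + var_mon (a1, b1) + var_mon (a2, b2)) \<noteq> 0"
    and "a1 \<noteq> a2" "A a1 b2" "A a2 b1"
  shows "Poly_Mapping.lookup (det (pattern_mat A \<rho> \<gamma> t :: 'k mpoly mat))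
           (\<nu> + var_mon (a1, b2) + var_mon (a2, b1))
       = - Poly_Mapping.lookup (det (pattern_mat A \<rho> \<gamma> t :: 'k mpoly mat))
           (\<nu> + var_mon (a1, b1) + var_mon (a2, b2))"
proof -
  obtain p where p: "p \<in> pattern_perms A \<rho> \<gamma> t"
    and \<mu>: "positions_mon \<rho> (\<gamma> \<circ> p) t = \<nu> + var_mon (a1, b1) + var_mon (a2, b2)"
    using nz by (rule lookup_det_pattern_mat_nonzero)
  obtain x1 where x1: "x1 < t" "(a1, b1) = (\<rho> x1, \<gamma> (p x1))"
    using lookup_positions_mon_nonzero[of \<rho> "\<gamma> \<circ> p" t "(a1, b1)"] \<mu> by (auto simp: lookup_add)
  obtain x2 where x2: "x2 < t" "(a2, b2) = (\<rho> x2, \<gamma> (p x2))"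
    using lookup_positions_mon_nonzero[of \<rho> "\<gamma> \<circ> p" t "(a2, b2)"] \<mu> by (auto simp: lookup_add)
  have x12: "x1 \<noteq> x2" using x1 x2 \<open>a1 \<noteq> a2\<close> by auto
  define q where "q = p \<circ> Transposition.transpose x1 x2"
  have q: "q \<in> pattern_perms A \<rho> \<gamma> t"
    unfolding q_def using x1 x2 assms(5,6) by (intro pattern_perms_transpose[OF p]) auto
  have "sign q = - sign p"
    unfolding q_def using p x12 by (intro sign_compose_transpose) (auto simp: pattern_perms_def)
  have "positions_mon \<rho> (\<gamma> \<circ> q) t + (var_mon (a1, b1) + var_mon (a2, b2))
      = positions_mon \<rho> (\<gamma> \<circ> p) t + var_mon (a1, b2) + var_mon (a2, b1)"
    using positions_mon_transpose[OF x12 x1(1) x2(1), of \<rho> "\<gamma> \<circ> p"] x1(2) x2(2)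
    by (simp add: q_def comp_assoc add.assoc)
  also have "\<dots> = (\<nu> + var_mon (a1, b2) + var_mon (a2, b1)) + (var_mon (a1, b1) + var_mon (a2, b2))"
    unfolding \<mu> by (simp add: ac_simps)
  finally have \<mu>': "positions_mon \<rho> (\<gamma> \<circ> q) t = \<nu> + var_mon (a1, b2) + var_mon (a2, b1)"
    by (rule add_right_imp_eq)
  show ?thesis
    unfolding \<mu>[symmetric] \<mu>'[symmetric] using \<open>sign q = - sign p\<close>
    by (simp add: lookup_det_pattern_mat_perm[OF \<rho> \<gamma> p] lookup_det_pattern_mat_perm[OF \<rho> \<gamma> q])
qed

lemma lookup_det_pattern_mat_exchange:
  fixes \<nu> :: "(nat \<times> nat) \<Rightarrow>\<^sub>0 nat"
  assumes \<rho>: "inj_on \<rho> {..<t}" and \<gamma>: "inj_on \<gamma> {..<t}"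
    and "a1 \<noteq> a2" "A a1 b1" "A a2 b2" "A a1 b2" "A a2 b1"
  shows "Poly_Mapping.lookup (det (pattern_mat A \<rho> \<gamma> t :: 'k::comm_ring_1 mpoly mat))
           (\<nu> + var_mon (a1, b2) + var_mon (a2, b1))
       = - Poly_Mapping.lookup (det (pattern_mat A \<rho> \<gamma> t :: 'k mpoly mat))
           (\<nu> + var_mon (a1, b1) + var_mon (a2, b2))"
proof -
  let ?coeff = "\<lambda>\<mu>. Poly_Mapping.lookup (det (pattern_mat A \<rho> \<gamma> t :: 'k mpoly mat)) \<mu>"
  have "?coeff (\<nu> + var_mon (a1, b1) + var_mon (a2, b2)) \<noteq> 0 \<Longrightarrow> ?thesis"
    by (rule lookup_det_pattern_mat_exchange_nonzero[OF \<rho> \<gamma> _ assms(3,6,7)])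
  moreover have "?coeff (\<nu> + var_mon (a1, b2) + var_mon (a2, b1)) \<noteq> 0 \<Longrightarrow>
      ?coeff (\<nu> + var_mon (a1, b1) + var_mon (a2, b2))
        = - ?coeff (\<nu> + var_mon (a1, b2) + var_mon (a2, b1))"
    by (rule lookup_det_pattern_mat_exchange_nonzero[OF \<rho> \<gamma> _ assms(3,4,5)])
  ultimately show ?thesis
    by (cases "?coeff (\<nu> + var_mon (a1, b2) + var_mon (a2, b1)) = 0") fastforce+
qed

lemma lookup_det_pattern_mat_nonzero_inj:
  assumes \<rho>: "inj_on \<rho> {..<t}" and \<gamma>: "inj_on \<gamma> {..<t}"
    and "Poly_Mapping.lookup (det (pattern_mat A \<rho> \<gamma> t)) (positions_mon i j s) \<noteq> 0"
  shows "inj_on i {..<s} \<and> inj_on j {..<s}"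
proof -
  obtain p where p: "p \<in> pattern_perms A \<rho> \<gamma> t" and eq: "positions_mon \<rho> (\<gamma> \<circ> p) t = positions_mon i j s"
    using assms(3) by (rule lookup_det_pattern_mat_nonzero)
  have "p permutes {..<t}" using p by (simp add: pattern_perms_def)
  then have "inj_on (\<gamma> \<circ> p) {..<t}"
    using \<gamma> by (intro comp_inj_on) (auto simp: permutes_inj_on permutes_image)
  then show ?thesis by (rule positions_mon_eq_imp_inj[OF eq[symmetric] \<rho>])
qed

section \<open>Coefficients of elements of I_t(A[x])\<close>

lemma I_t_homogeneous_component:
  assumes "f \<in> I_t A m n t"
  shows "\<exists>F w. F \<subseteq> minors t (gen_mat A m n) \<and>
    (\<forall>\<mu>. mon_deg \<mu> = t \<longrightarrow> Poly_Mapping.lookup f \<mu> = (\<Sum>g\<in>F. w g * Poly_Mapping.lookup g \<mu>))"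
proof -
  obtain F c where F: "F \<subseteq> minors t (gen_mat A m n)" and f: "f = (\<Sum>g\<in>F. c g * g)"
    using assms unfolding I_t_def by blast
  have "Poly_Mapping.lookup (c g * g) \<mu> = Poly_Mapping.lookup (c g) 0 * Poly_Mapping.lookup g \<mu>"
    if "g \<in> F" "mon_deg \<mu> = t" for g \<mu>
  proof -
    have "g \<in> minors t (gen_mat A m n)" using that(1) F by blast
    then obtain \<rho> \<gamma> where "inj_on \<rho> {..<t}" "inj_on \<gamma> {..<t}" "g = det (pattern_mat A \<rho> \<gamma> t)"
      by (rule minors_gen_mat)
    then show ?thesis
      using that(2) by (intro lookup_mult_homogeneous) (simp add: mon_deg_keys_det_pattern_mat)
  qed
  then show ?thesis
    using F by (intro exI[of _ F] exI[of _ "\<lambda>g. Poly_Mapping.lookup (c g) 0"]) (simp add: f lookup_sum)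
qed

lemma lookup_I_t_eq_0:
  fixes f :: "'k::comm_ring_1 mpoly"
  assumes "f \<in> I_t A m n t" "mon_deg \<mu> = t"
    and "\<And>g. g \<in> (minors t (gen_mat A m n) :: 'k mpoly set) \<Longrightarrow> Poly_Mapping.lookup g \<mu> = 0"
  shows "Poly_Mapping.lookup f \<mu> = 0"
proof -
  obtain F w where F: "F \<subseteq> minors t (gen_mat A m n)"
    and coeff: "\<And>\<mu>. mon_deg \<mu> = t \<Longrightarrow> Poly_Mapping.lookup f \<mu> = (\<Sum>g\<in>F. w g * Poly_Mapping.lookup g \<mu>)"
    using I_t_homogeneous_component[OF assms(1)] by blast
  show ?thesis
    unfolding coeff[OF assms(2)] using F assms(3) by (intro sum.neutral) (auto simp: subset_iff)
qed

lemma lookup_I_t_eq_neg: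
  fixes f :: "'k::comm_ring_1 mpoly"
  assumes "f \<in> I_t A m n t" "mon_deg \<mu> = t" "mon_deg \<mu>' = t"
    and "\<And>g. g \<in> (minors t (gen_mat A m n) :: 'k mpoly set) \<Longrightarrow>
           Poly_Mapping.lookup g \<mu>' = - Poly_Mapping.lookup g \<mu>"
  shows "Poly_Mapping.lookup f \<mu>' = - Poly_Mapping.lookup f \<mu>"
proof -
  obtain F w where F: "F \<subseteq> minors t (gen_mat A m n)"
    and coeff: "\<And>\<mu>. mon_deg \<mu> = t \<Longrightarrow> Poly_Mapping.lookup f \<mu> = (\<Sum>g\<in>F. w g * Poly_Mapping.lookup g \<mu>)"
    using I_t_homogeneous_component[OF assms(1)] by blast
  have "Poly_Mapping.lookup f \<mu>' = (\<Sum>g\<in>F. - (w g * Poly_Mapping.lookup g \<mu>))"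
    unfolding coeff[OF assms(3)] using F assms(4) by (intro sum.cong) (auto simp: subset_iff)
  then show ?thesis by (simp add: coeff[OF assms(2)] sum_negf)
qed

lemma positions_mon_in_I_t_inj:
  assumes "Poly_Mapping.single (positions_mon i j s) (1::'k::comm_ring_1) \<in> I_t A m n s"
  shows "inj_on i {..<s} \<and> inj_on j {..<s}"
proof (rule ccontr)
  assume not_inj: "\<not> (inj_on i {..<s} \<and> inj_on j {..<s})"
  have "Poly_Mapping.lookup g (positions_mon i j s) = 0"
    if minor: "g \<in> minors s (gen_mat A m n)" for g
  proof -
    obtain \<rho> \<gamma> where \<rho>: "inj_on \<rho> {..<s}" and \<gamma>: "inj_on \<gamma> {..<s}"
      and g: "g = det (pattern_mat A \<rho> \<gamma> s)"
      using minor by (rule minors_gen_mat)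
    show ?thesis
    proof (rule ccontr)
      assume "Poly_Mapping.lookup g (positions_mon i j s) \<noteq> 0"
      then have "inj_on i {..<s} \<and> inj_on j {..<s}"
        unfolding g by (rule lookup_det_pattern_mat_nonzero_inj[OF \<rho> \<gamma>])
      with not_inj show False by contradiction
    qed
  qed
  then have "Poly_Mapping.lookup (Poly_Mapping.single (positions_mon i j s) (1::'k))
      (positions_mon i j s) = 0"
    by (rule lookup_I_t_eq_0[OF assms mon_deg_positions_mon])
  then show False by simp
qed

lemma positions_mon_in_I_t_no_exchange:
  assumes I: "Poly_Mapping.single (positions_mon i j s) (1::'k::comm_ring_1) \<in> I_t A m n s"
    and l: "l \<noteq> l'" "l < s" "l' < s" and A: "A (i l) (j l)" "A (i l') (j l')"
  shows "\<not> (A (i l) (j l') \<and> A (i l') (j l))"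
proof
  assume exch: "A (i l) (j l') \<and> A (i l') (j l)"
  have "i l \<noteq> i l'" "j l \<noteq> j l'"
    using positions_mon_in_I_t_inj[OF I] l by (auto dest: inj_onD)
  define \<nu> where "\<nu> = (\<Sum>x\<in>{..<s} - {l, l'}. var_mon (i x, j x))"
  define \<mu> where "\<mu> = positions_mon i j s"
  define \<mu>' where "\<mu>' = \<nu> + var_mon (i l, j l') + var_mon (i l', j l)"
  have \<mu>_split: "\<mu> = \<nu> + var_mon (i l, j l) + var_mon (i l', j l')"
    unfolding \<mu>_def \<nu>_def using positions_mon_split[OF l] by (simp add: ac_simps)
  have "mon_deg \<mu> = s" by (simp add: \<mu>_def)
  moreover have "mon_deg \<mu>' = mon_deg \<mu>" by (simp add: \<mu>'_def \<mu>_split)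
  ultimately have "mon_deg \<mu>' = s" by simp
  have "Poly_Mapping.lookup \<mu>' (i l, j l') \<noteq> Poly_Mapping.lookup \<mu> (i l, j l')"
    unfolding \<mu>'_def \<mu>_split using \<open>i l \<noteq> i l'\<close> \<open>j l \<noteq> j l'\<close> by (simp add: lookup_add lookup_single)
  then have "\<mu>' \<noteq> \<mu>" by auto
  have "Poly_Mapping.lookup g \<mu>' = - Poly_Mapping.lookup g \<mu>"
    if minor: "g \<in> minors s (gen_mat A m n)" for g
  proof -
    obtain \<rho> \<gamma> where \<rho>: "inj_on \<rho> {..<s}" and \<gamma>: "inj_on \<gamma> {..<s}"
      and g: "g = det (pattern_mat A \<rho> \<gamma> s)"
      using minor by (rule minors_gen_mat)
    show ?thesis
      unfolding g \<mu>'_def \<mu>_split using \<open>i l \<noteq> i l'\<close> A exch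
      by (intro lookup_det_pattern_mat_exchange[OF \<rho> \<gamma>]) auto
  qed
  then have "Poly_Mapping.lookup (Poly_Mapping.single \<mu> (1::'k)) \<mu>'
      = - Poly_Mapping.lookup (Poly_Mapping.single \<mu> (1::'k)) \<mu>"
    by (rule lookup_I_t_eq_neg[OF I[folded \<mu>_def] \<open>mon_deg \<mu> = s\<close> \<open>mon_deg \<mu>' = s\<close>])
  with \<open>\<mu>' \<noteq> \<mu>\<close> show False by (simp add: lookup_single when_def)
qed

theorem theorem4p13:
  fixes A :: "nat \<Rightarrow> nat \<Rightarrow> bool" and m n s :: nat
    and i j :: "nat \<Rightarrow> nat"
  assumes "s \<ge> 2"
    and "\<forall>l<s. i l < m \<and> j l < n \<and> A (i l) (j l)"
    and "(\<Prod>l<s. var (i l) (j l)) \<in> (I_t A m n s :: 'k::field mpoly set)"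
  shows "isolated_set A m n {(i l, j l) | l. l < s}"
proof -
  have "(\<Prod>l<s. var (i l) (j l)) = Poly_Mapping.single (positions_mon i j s) (1::'k)"
    using prod_single_if[of "{..<s}" "\<lambda>_. True"] by (simp add: var_def positions_mon_def)
  then have I: "Poly_Mapping.single (positions_mon i j s) (1::'k) \<in> I_t A m n s"
    using assms(3) by simp
  \<comment> \<open>The pairwise condition holds for every \<open>s\<close>.\<close>
  have "isolated_pair A (i l, j l) (i l', j l')" if "l < s" "l' < s" "(i l, j l) \<noteq> (i l', j l')" for l l'
    using positions_mon_in_I_t_no_exchange[OF I, of l l'] assms(2) that
    by (auto simp: isolated_pair_def)
  then show ?thesis
    using assms(2) unfolding isolated_set_def by blast
qed

end
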